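(* Let $T>0$, $\alpha>0$, $\beta>0$, $\sigma>0$, $u_1>0$, let $N$ be a positive integer, and consider the optimal control problem $$\int_0^T\big(\alpha R(t)+\beta u(t)\big)\,dt\to\inf,\qquad \dot R=-uR+N\sigma^2,\qquad R(0)=R_0,\qquad 0\le u(t)\le u_1,$$ with Pontryagin Hamiltonian $H(R,\psi,u)=-(\alpha R+\beta u)+\psi(-uR+N\sigma^2)=H_0(R,\psi)+uH_1(R,\psi)$, where $H_0=-\alpha R+N\sigma^2\psi$ and $H_1=-\beta-R\psi$, and Hamiltonian system $\dot\psi=\alpha+u\psi$, $\dot R=-uR+N\sigma^2$. Suppose $\sqrt{\alpha N\sigma^2/\beta}\le u_1$. Then $$\hat R_s(t)\equiv\sqrt{N\sigma^2\beta/\alpha},\qquad \psi_s(t)\equiv-\sqrt{\alpha\beta/(N\sigma^2)}$$ is a singular extremal of order $1$, and the corresponding singular control is $u_s=\sqrt{\alpha N\sigma^2/\beta}$.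
   Context: An extremal is a solution $(R(t),\psi(t))$ of the Hamiltonian system with $u=u(t)\in[0,u_1]$ satisfying the maximum condition $H(R(t),\psi(t),u(t))=\max_{0\le v\le u_1}H(R(t),\psi(t),v)$. An extremal on an interval $(t_1,t_2)$ is singular if the switching function vanishes identically there: $H_1(R(t),\psi(t))=0$ for all $t\in(t_1,t_2)$. A singular extremal has order $q$ if $\frac{\partial}{\partial u}\frac{d^k}{dt^k}H_1(R,\psi)=0$ for $k=0,\dots,2q-1$ and $\frac{\partial}{\partial u}\frac{d^{2q}}{dt^{2q}}H_1(R,\psi)\ne0$ in a neighbourhood of the trajectory, where time derivatives are computed along the Hamiltonian system. *)

theory Defs
  imports "HOL-Analysis.Analysis"
begin

text \<open>A "control jet" us :: nat => real stands for
  (u, u', u'', ...), i.e. us 0 = u, us (j+1) = j+1-st time derivative of u.\<close>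

definition Ham :: "real \<Rightarrow> real \<Rightarrow> real \<Rightarrow> nat \<Rightarrow> real \<Rightarrow> real \<Rightarrow> real \<Rightarrow> real" where
  "Ham \<alpha> \<beta> \<sigma> N R \<psi> u = - (\<alpha> * R + \<beta> * u) + \<psi> * (- u * R + real N * \<sigma>\<^sup>2)"

definition H0 :: "real \<Rightarrow> real \<Rightarrow> nat \<Rightarrow> real \<Rightarrow> real \<Rightarrow> real" where
  "H0 \<alpha> \<sigma> N R \<psi> = - \<alpha> * R + real N * \<sigma>\<^sup>2 * \<psi>"

definition H1 :: "real \<Rightarrow> real \<Rightarrow> real \<Rightarrow> real" where
  "H1 \<beta> R \<psi> = - \<beta> - R * \<psi>"

definition ham_sol :: "real \<Rightarrow> real \<Rightarrow> nat \<Rightarrow> real set \<Rightarrow> (real \<Rightarrow> real) \<Rightarrow> (real \<Rightarrow> real) \<Rightarrow> (real \<Rightarrow> real) \<Rightarrow> bool" where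
  "ham_sol \<alpha> \<sigma> N I R \<psi> u \<longleftrightarrow>
     (\<forall>t\<in>I. (R has_real_derivative (- u t * R t + real N * \<sigma>\<^sup>2)) (at t) \<and>
            (\<psi> has_real_derivative (\<alpha> + u t * \<psi> t)) (at t))"

definition extremal :: "real \<Rightarrow> real \<Rightarrow> real \<Rightarrow> nat \<Rightarrow> real \<Rightarrow> real set \<Rightarrow> (real \<Rightarrow> real) \<Rightarrow> (real \<Rightarrow> real) \<Rightarrow> (real \<Rightarrow> real) \<Rightarrow> bool" where
  "extremal \<alpha> \<beta> \<sigma> N u1 I R \<psi> u \<longleftrightarrow>
     ham_sol \<alpha> \<sigma> N I R \<psi> u \<and>
     (\<forall>t\<in>I. u t \<in> {0..u1} \<and>
        Ham \<alpha> \<beta> \<sigma> N (R t) (\<psi> t) (u t) = (MAX v\<in>{0..u1}. Ham \<alpha> \<beta> \<sigma> N (R t) (\<psi> t) v))"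

definition singular_extremal :: "real \<Rightarrow> real \<Rightarrow> real \<Rightarrow> nat \<Rightarrow> real \<Rightarrow> real set \<Rightarrow> (real \<Rightarrow> real) \<Rightarrow> (real \<Rightarrow> real) \<Rightarrow> (real \<Rightarrow> real) \<Rightarrow> bool" where
  "singular_extremal \<alpha> \<beta> \<sigma> N u1 I R \<psi> u \<longleftrightarrow>
     extremal \<alpha> \<beta> \<sigma> N u1 I R \<psi> u \<and> (\<forall>t\<in>I. H1 \<beta> (R t) (\<psi> t) = 0)"

text \<open>The k-th derivative of a function of (R, psi) only
  depends on the jet entries us 0, ..., us (k-1), hence the finite sum.\<close>
fun tder :: "real \<Rightarrow> real \<Rightarrow> nat \<Rightarrow> nat \<Rightarrow> (real \<times> real \<times> (nat \<Rightarrow> real) \<Rightarrow> real)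
             \<Rightarrow> (real \<times> real \<times> (nat \<Rightarrow> real) \<Rightarrow> real)" where
  "tder \<alpha> \<sigma> N 0 F = F"
| "tder \<alpha> \<sigma> N (Suc k) F = (\<lambda>(R, \<psi>, us).
      deriv (\<lambda>r. tder \<alpha> \<sigma> N k F (r, \<psi>, us)) R * (- us 0 * R + real N * \<sigma>\<^sup>2)
    + deriv (\<lambda>p. tder \<alpha> \<sigma> N k F (R, p, us)) \<psi> * (\<alpha> + us 0 * \<psi>)
    + (\<Sum>j<k. deriv (\<lambda>x. tder \<alpha> \<sigma> N k F (R, \<psi>, us(j := x))) (us j) * us (Suc j)))"

definition dudH1 :: "real \<Rightarrow> real \<Rightarrow> real \<Rightarrow> nat \<Rightarrow> nat \<Rightarrow> real \<Rightarrow> real \<Rightarrow> (nat \<Rightarrow> real) \<Rightarrow> real" where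
  "dudH1 \<alpha> \<beta> \<sigma> N k R \<psi> us =
     deriv (\<lambda>x. tder \<alpha> \<sigma> N k (\<lambda>(r, p, _). H1 \<beta> r p) (R, \<psi>, us(0 := x))) (us 0)"

definition singular_extremal_order :: "real \<Rightarrow> real \<Rightarrow> real \<Rightarrow> nat \<Rightarrow> real \<Rightarrow> real set \<Rightarrow> (real \<Rightarrow> real) \<Rightarrow> (real \<Rightarrow> real) \<Rightarrow> (real \<Rightarrow> real) \<Rightarrow> nat \<Rightarrow> bool" where
  "singular_extremal_order \<alpha> \<beta> \<sigma> N u1 I R \<psi> u q \<longleftrightarrow>
     singular_extremal \<alpha> \<beta> \<sigma> N u1 I R \<psi> u \<and>
     (\<exists>U::(real \<times> real) set. open U \<and> (\<forall>t\<in>I. (R t, \<psi> t) \<in> U) \<and>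
        (\<forall>(r, p)\<in>U. \<forall>us.
           (\<forall>k<2*q. dudH1 \<alpha> \<beta> \<sigma> N k r p us = 0) \<and> dudH1 \<alpha> \<beta> \<sigma> N (2*q) r p us \<noteq> 0))"

end

theory Submission
  imports Defs
begin

text \<open>Since \<open>H = H0 + u H1\<close> and \<open>H1\<close> vanishes along the constant trajectory, the maximum
  condition holds for every admissible control; the Hamiltonian system forces the control
  to be constant and equal to \<open>u_s\<close>. Differentiating \<open>H1\<close> twice along the system gives
  \<open>(\<alpha> R - N\<sigma>\<^sup>2 \<psi>) u - 2\<alpha>N\<sigma>\<^sup>2\<close>, so the first two derivatives do not depend on \<open>u\<close>
  while the second has \<open>u\<close>-coefficient \<open>\<alpha> R - N\<sigma>\<^sup>2 \<psi> > 0\<close> near the trajectory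
  (there \<open>R > 0 > \<psi>\<close>).\<close>

lemma deriv_affine: "deriv (\<lambda>x. a * x + b) y = (a::real)"
  by (rule DERIV_imp_deriv) (auto intro!: derivative_eq_intros)

lemma deriv_const_fun: "deriv (\<lambda>x. b) y = (0::real)"
  by (rule DERIV_imp_deriv) (auto intro!: derivative_eq_intros)

lemma sqrt_mult_sqrt_eq:
  assumes "0 \<le> x" "0 \<le> y" "0 \<le> w" "x * y = w\<^sup>2"
  shows "sqrt x * sqrt y = w"
  using assms by (metis real_sqrt_abs abs_of_nonneg real_sqrt_mult)

lemma Ham_eq_H0_H1: "Ham \<alpha> \<beta> \<sigma> N R \<psi> u = H0 \<alpha> \<sigma> N R \<psi> + u * H1 \<beta> R \<psi>"
  unfolding Ham_def H0_def H1_def by (simp add: algebra_simps)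

lemma tder_H1_1:
  "tder \<alpha> \<sigma> N 1 (\<lambda>(r, p, _). H1 \<beta> r p) = (\<lambda>(r, p, us). - \<alpha> * r - real N * \<sigma>\<^sup>2 * p)"
proof -
  have "deriv (\<lambda>r. - \<beta> - r * \<psi>) R = - \<psi>" for R \<psi> :: real
    using deriv_affine[of "-\<psi>" "-\<beta>"] by (simp add: algebra_simps)
  moreover have "deriv (\<lambda>p. - \<beta> - R * p) \<psi> = - R" for R \<psi> :: real
    using deriv_affine[of "-R" "-\<beta>"] by (simp add: algebra_simps)
  ultimately show ?thesis
    by (auto simp: H1_def fun_eq_iff algebra_simps)
qed

lemma tder_H1_2:
  "tder \<alpha> \<sigma> N 2 (\<lambda>(r, p, _). H1 \<beta> r p) =
     (\<lambda>(r, p, us). (\<alpha> * r - real N * \<sigma>\<^sup>2 * p) * us 0 - 2 * \<alpha> * real N * \<sigma>\<^sup>2)"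
proof -
  have two: "tder \<alpha> \<sigma> N 2 = tder \<alpha> \<sigma> N (Suc 1)"
    by (simp only: Suc_1)
  have "deriv (\<lambda>r. - \<alpha> * r - real N * \<sigma>\<^sup>2 * \<psi>) R = - \<alpha>" for R \<psi> :: real
    using deriv_affine[of "-\<alpha>" "- real N * \<sigma>\<^sup>2 * \<psi>"] by simp
  moreover have "deriv (\<lambda>p. - \<alpha> * R - real N * \<sigma>\<^sup>2 * p) \<psi> = - real N * \<sigma>\<^sup>2" for R \<psi> :: real
    using deriv_affine[of "- real N * \<sigma>\<^sup>2" "- \<alpha> * R"] by (simp add: algebra_simps)
  ultimately show ?thesis
    unfolding two tder.simps(2) tder_H1_1
    by (auto simp: deriv_const_fun fun_eq_iff algebra_simps)
qed

lemma dudH1_0: "dudH1 \<alpha> \<beta> \<sigma> N 0 r p us = 0"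
  unfolding dudH1_def by (simp add: deriv_const_fun)

lemma dudH1_1: "dudH1 \<alpha> \<beta> \<sigma> N 1 r p us = 0"
  unfolding dudH1_def tder_H1_1 by (simp add: deriv_const_fun)

lemma dudH1_2: "dudH1 \<alpha> \<beta> \<sigma> N 2 r p us = \<alpha> * r - real N * \<sigma>\<^sup>2 * p"
  unfolding dudH1_def tder_H1_2 by (simp add: deriv_affine)

lemma ham_sol_const_iff:
  "ham_sol \<alpha> \<sigma> N I (\<lambda>t. R) (\<lambda>t. \<psi>) u \<longleftrightarrow>
     (\<forall>t\<in>I. u t * R = real N * \<sigma>\<^sup>2 \<and> u t * \<psi> = - \<alpha>)"
proof -
  have "((\<lambda>t. c) has_real_derivative d) (at t) \<longleftrightarrow> d = 0" for c d t :: real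
    using DERIV_unique DERIV_const by blast
  then show ?thesis
    unfolding ham_sol_def by (auto simp: algebra_simps)
qed

lemma singular_extremal_if_H1_zero:
  assumes "ham_sol \<alpha> \<sigma> N I R \<psi> u" "\<forall>t\<in>I. u t \<in> {0..u1}" "\<forall>t\<in>I. H1 \<beta> (R t) (\<psi> t) = 0"
  shows "singular_extremal \<alpha> \<beta> \<sigma> N u1 I R \<psi> u"
proof -
  have "Ham \<alpha> \<beta> \<sigma> N (R t) (\<psi> t) (u t) = (MAX v\<in>{0..u1}. Ham \<alpha> \<beta> \<sigma> N (R t) (\<psi> t) v)"
    if "t \<in> I" for t
  proof -
    have "{0..u1} \<noteq> {}" using assms(2) that by auto
    then have "(\<lambda>v. Ham \<alpha> \<beta> \<sigma> N (R t) (\<psi> t) v) ` {0..u1} = {H0 \<alpha> \<sigma> N (R t) (\<psi> t)}"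
      using assms(3) that by (auto simp: Ham_eq_H0_H1)
    then show ?thesis
      using assms(3) that by (simp add: Ham_eq_H0_H1)
  qed
  then show ?thesis
    using assms unfolding singular_extremal_def extremal_def by blast
qed

lemma singular_extremal_order_one:
  assumes "singular_extremal \<alpha> \<beta> \<sigma> N u1 I R \<psi> u"
    and "\<forall>t\<in>I. \<alpha> * R t \<noteq> real N * \<sigma>\<^sup>2 * \<psi> t"
  shows "singular_extremal_order \<alpha> \<beta> \<sigma> N u1 I R \<psi> u 1"
proof -
  define U where "U = {x :: real \<times> real. \<alpha> * fst x \<noteq> real N * \<sigma>\<^sup>2 * snd x}"
  have "open U"
    unfolding U_def by (intro open_Collect_neq continuous_intros)
  moreover have "\<forall>t\<in>I. (R t, \<psi> t) \<in> U"
    using assms(2) by (simp add: U_def)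
  moreover have "\<forall>(r, p)\<in>U. \<forall>us. (\<forall>k<2 * 1. dudH1 \<alpha> \<beta> \<sigma> N k r p us = 0)
                   \<and> dudH1 \<alpha> \<beta> \<sigma> N (2 * 1) r p us \<noteq> 0"
    by (auto simp: U_def less_2_cases_iff dudH1_0 dudH1_1[unfolded One_nat_def] dudH1_2)
  ultimately show ?thesis
    using assms(1) unfolding singular_extremal_order_def by blast
qed

theorem lemma2:
  fixes T \<alpha> \<beta> \<sigma> u1 :: real and N :: nat
  assumes "T > 0" "\<alpha> > 0" "\<beta> > 0" "\<sigma> > 0" "u1 > 0" "N > 0"
    and "sqrt (\<alpha> * real N * \<sigma>\<^sup>2 / \<beta>) \<le> u1"
  shows "singular_extremal_order \<alpha> \<beta> \<sigma> N u1 {0<..<T}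
           (\<lambda>t. sqrt (real N * \<sigma>\<^sup>2 * \<beta> / \<alpha>)) (\<lambda>t. - sqrt (\<alpha> * \<beta> / (real N * \<sigma>\<^sup>2)))
           (\<lambda>t. sqrt (\<alpha> * real N * \<sigma>\<^sup>2 / \<beta>)) 1
       \<and> (\<forall>u. ham_sol \<alpha> \<sigma> N {0<..<T}
               (\<lambda>t. sqrt (real N * \<sigma>\<^sup>2 * \<beta> / \<alpha>)) (\<lambda>t. - sqrt (\<alpha> * \<beta> / (real N * \<sigma>\<^sup>2))) u
            \<longrightarrow> (\<forall>t\<in>{0<..<T}. u t = sqrt (\<alpha> * real N * \<sigma>\<^sup>2 / \<beta>)))"
proof -
  define c where "c = real N * \<sigma>\<^sup>2"
  define R where "R = sqrt (c * \<beta> / \<alpha>)"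
  define P where "P = - sqrt (\<alpha> * \<beta> / c)"
  define U where "U = sqrt (\<alpha> * c / \<beta>)"
  have "c > 0" using assms unfolding c_def by simp
  then have pos: "R > 0" "P < 0" and RP: "R * P = - \<beta>" and UR: "U * R = c" and UP: "U * P = - \<alpha>"
    using assms unfolding R_def P_def U_def
    by (auto intro!: sqrt_mult_sqrt_eq simp: field_simps power2_eq_square)
  have sol: "ham_sol \<alpha> \<sigma> N {0<..<T} (\<lambda>t. R) (\<lambda>t. P) u \<longleftrightarrow> (\<forall>t\<in>{0<..<T}. u t = U)" for u
    using UR UP pos unfolding ham_sol_const_iff c_def
    by (metis mult.commute mult_right_cancel less_irrefl)
  have "singular_extremal \<alpha> \<beta> \<sigma> N u1 {0<..<T} (\<lambda>t. R) (\<lambda>t. P) (\<lambda>t. U)"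
    using sol[of "\<lambda>t. U"] RP assms(7) \<open>c > 0\<close> assms(2,3)
    by (intro singular_extremal_if_H1_zero) (auto simp: H1_def U_def c_def mult.assoc)
  moreover have "\<alpha> * R \<noteq> real N * \<sigma>\<^sup>2 * P"
    using pos assms(2) \<open>c > 0\<close> unfolding c_def
    by (smt (verit) mult_pos_neg mult_pos_pos)
  ultimately have "singular_extremal_order \<alpha> \<beta> \<sigma> N u1 {0<..<T} (\<lambda>t. R) (\<lambda>t. P) (\<lambda>t. U) 1"
    by (intro singular_extremal_order_one) auto
  moreover have "R = sqrt (real N * \<sigma>\<^sup>2 * \<beta> / \<alpha>)" "P = - sqrt (\<alpha> * \<beta> / (real N * \<sigma>\<^sup>2))"
    "U = sqrt (\<alpha> * real N * \<sigma>\<^sup>2 / \<beta>)"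
    unfolding R_def P_def U_def c_def by (simp_all add: mult.assoc)
  ultimately show ?thesis
    using sol by simp
qed

end
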